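(* Consider the scalar system $\dot x(t)=\Big(\frac{1}{1+t+x(t)^2}-t|\cos t|\Big)x(t)$, $t\in[0,\infty)$. Every solution satisfies $$|x(t)|\le\exp\Big(\ln\big(1+\tfrac{3\pi}{2}\big)+1\Big)\exp\Big(-\frac{2}{3\pi}(t-t_0)\Big)|x(t_0)|,\qquad\forall t\ge t_0\ge0;$$ in particular the system is globally uniformly exponentially stable.
   Context: Globally uniformly exponentially stable: there exist constants $\theta>0$, $\alpha>0$ with $|x(t)|\le\theta|x(t_0)|e^{-\alpha(t-t_0)}$ for all $t\ge t_0$ and all solutions. *)

theory Defs
  imports "HOL-Analysis.Analysis"
begin

definition is_solution_from :: "(real \<Rightarrow> real \<Rightarrow> real) \<Rightarrow> real \<Rightarrow> (real \<Rightarrow> real) \<Rightarrow> bool" where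
  "is_solution_from f t0 x \<longleftrightarrow>
     (\<forall>t\<ge>t0. (x has_real_derivative f t (x t)) (at t within {t0..}))"

definition GUES :: "(real \<Rightarrow> real \<Rightarrow> real) \<Rightarrow> bool" where
  "GUES f \<longleftrightarrow> (\<exists>\<theta>>0. \<exists>\<alpha>>0. \<forall>t0\<ge>0. \<forall>x. is_solution_from f t0 x \<longrightarrow>
      (\<forall>t\<ge>t0. \<bar>x t\<bar> \<le> \<theta> * \<bar>x t0\<bar> * exp (- \<alpha> * (t - t0))))"

definition ex10_rhs :: "real \<Rightarrow> real \<Rightarrow> real" where
  "ex10_rhs t x = (1 / (1 + t + x\<^sup>2) - t * \<bar>cos t\<bar>) * x"

end

theory Submission
  imports Defs
begin

text \<open>Along a solution of \<open>x' = g(t) x\<close> with \<open>g \<le> B'\<close> the quantity \<open>x(t)\<^sup>2 exp(-2 B(t))\<close> is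
  nonincreasing, so \<open>|x|\<close> grows at most like \<open>exp B\<close>. Here \<open>g(t) \<le> 1/(1+t) - t cos\<^sup>2 t\<close>, whose
  primitive is \<open>ln(1+t) - t\<^sup>2/4\<close> up to oscillating terms of size \<open>O(t)\<close>; this quadratic decay
  beats the logarithm on windows \<open>[t0, t]\<close> of length at least 1, while on shorter windows the
  crude bound \<open>g(t) \<le> 1/(1+t)\<close> suffices.\<close>

lemma nonincreasing_if_derivative_nonpos_within:
  fixes f f' :: "real \<Rightarrow> real"
  assumes f: "\<And>s. s \<ge> a \<Longrightarrow> (f has_real_derivative f' s) (at s within {a..})"
    and nonpos: "\<And>s. s \<ge> a \<Longrightarrow> f' s \<le> 0" and "a \<le> t"
  shows "f t \<le> f a"
proof -
  have "\<exists>z\<in>{a..t}. f t - f a = (\<lambda>h. f' z * h) (t - a)"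
  proof (rule mvt_very_simple[OF \<open>a \<le> t\<close>])
    fix z assume "a \<le> z" "z \<le> t"
    then have "(f has_real_derivative f' z) (at z within {a..t})"
      by (intro has_field_derivative_subset[OF f]) auto
    then show "(f has_derivative (\<lambda>h. f' z * h)) (at z within {a..t})"
      by (simp add: has_field_derivative_def)
  qed
  then obtain z where "z \<ge> a" "f t - f a = f' z * (t - a)" by auto
  moreover have "f' z * (t - a) \<le> 0"
    using nonpos[OF \<open>z \<ge> a\<close>] \<open>a \<le> t\<close> by (simp add: mult_nonpos_nonneg)
  ultimately show ?thesis by linarith
qed

lemma linear_ode_growth_bound:
  fixes x g B B' :: "real \<Rightarrow> real"
  assumes x: "\<And>s. s \<ge> t0 \<Longrightarrow> (x has_real_derivative g s * x s) (at s within {t0..})"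
    and B: "\<And>s. s \<ge> t0 \<Longrightarrow> (B has_real_derivative B' s) (at s within {t0..})"
    and rate: "\<And>s. s \<ge> t0 \<Longrightarrow> g s \<le> B' s" and "t0 \<le> t"
  shows "\<bar>x t\<bar> \<le> exp (B t - B t0) * \<bar>x t0\<bar>"
proof -
  define y where "y s = (x s)\<^sup>2 * exp (-2 * B s)" for s
  have "y t \<le> y t0"
  proof (rule nonincreasing_if_derivative_nonpos_within[OF _ _ \<open>t0 \<le> t\<close>])
    fix s assume "s \<ge> t0"
    show "(y has_real_derivative 2 * (x s)\<^sup>2 * exp (-2 * B s) * (g s - B' s)) (at s within {t0..})"
      unfolding y_def
      by (rule derivative_eq_intros x[OF \<open>s \<ge> t0\<close>] B[OF \<open>s \<ge> t0\<close>] refl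
          | simp add: algebra_simps power2_eq_square)+
    show "2 * (x s)\<^sup>2 * exp (-2 * B s) * (g s - B' s) \<le> 0"
      using rate[OF \<open>s \<ge> t0\<close>] by (intro mult_nonneg_nonpos) auto
  qed
  then have "(x t)\<^sup>2 * exp (-2 * B t) * exp (2 * B t) \<le> (x t0)\<^sup>2 * exp (-2 * B t0) * exp (2 * B t)"
    unfolding y_def by (intro mult_right_mono) auto
  then have "\<bar>x t\<bar>\<^sup>2 \<le> (exp (B t - B t0) * \<bar>x t0\<bar>)\<^sup>2"
    by (simp add: power_mult_distrib mult_exp_exp algebra_simps flip: exp_of_nat_mult)
  then show ?thesis by (rule power2_le_imp_le) simp
qed

lemma ln_one_plus_diff_le:
  fixes s t :: real
  assumes "0 \<le> s" "s \<le> t"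
  shows "ln (1 + t) - ln (1 + s) \<le> ln (1 + (t - s))"
proof -
  have "1 + t \<le> (1 + s) * (1 + (t - s))"
    using assms mult_nonneg_nonneg[of s "t - s"] by (simp add: algebra_simps)
  then have "ln (1 + t) \<le> ln ((1 + s) * (1 + (t - s)))"
    using assms by simp
  also have "\<dots> = ln (1 + s) + ln (1 + (t - s))"
    using assms by (simp add: ln_mult)
  finally show ?thesis by simp
qed

definition damping_primitive :: "real \<Rightarrow> real" where
  "damping_primitive s = s\<^sup>2 / 4 + s * sin (2 * s) / 4 + cos (2 * s) / 8"

lemma damping_primitive_deriv:
  "(damping_primitive has_real_derivative s * (cos s)\<^sup>2) (at s within A)"
proof -
  have "(damping_primitive has_real_derivative s / 2 + (sin (2 * s) + s * (cos (2 * s) * 2)) / 4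
      - sin (2 * s) * 2 / 8) (at s within A)"
    unfolding damping_primitive_def[abs_def] by (auto intro!: derivative_eq_intros)
  moreover have "s / 2 + (sin (2 * s) + s * (cos (2 * s) * 2)) / 4 - sin (2 * s) * 2 / 8
      = s * (cos s)\<^sup>2"
    unfolding cos_double_cos by (simp add: field_simps)
  ultimately show ?thesis by simp
qed

lemma damping_primitive_increment_ge:
  assumes "0 \<le> s" "0 \<le> t"
  shows "(t\<^sup>2 - s\<^sup>2 - t - s) / 4 - 1/4 \<le> damping_primitive t - damping_primitive s"
proof -
  have "- t \<le> t * sin (2 * t)" "s * sin (2 * s) \<le> s"
    using assms mult_left_mono[of "- sin (2 * t)" 1 t] mult_left_mono[of "sin (2 * s)" 1 s]
    by auto
  moreover have "cos (2 * s) - cos (2 * t) \<le> 2"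
    using cos_le_one[of "2 * s"] cos_ge_minus_one[of "2 * t"] by linarith
  ultimately show ?thesis
    unfolding damping_primitive_def by (simp add: field_simps)
qed

lemma ex10_growth_term_le:
  fixes s y :: real
  assumes "0 \<le> s"
  shows "1 / (1 + s + y\<^sup>2) \<le> 1 / (1 + s)"
  using assms by (intro divide_left_mono mult_pos_pos) (auto intro: add_pos_nonneg)

lemma ex10_rate_le_log_rate:
  fixes s y :: real
  assumes "0 \<le> s"
  shows "1 / (1 + s + y\<^sup>2) - s * \<bar>cos s\<bar> \<le> 1 / (1 + s)"
  using ex10_growth_term_le[OF assms, of y] mult_nonneg_nonneg[OF assms abs_ge_zero[of "cos s"]]
  by linarith

lemma ex10_rate_le_damped_rate:
  fixes s y :: real
  assumes "0 \<le> s"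
  shows "1 / (1 + s + y\<^sup>2) - s * \<bar>cos s\<bar> \<le> 1 / (1 + s) - s * (cos s)\<^sup>2"
proof -
  have "(cos s)\<^sup>2 \<le> \<bar>cos s\<bar>"
    using abs_cos_le_one[of s] mult_left_mono[of "\<bar>cos s\<bar>" 1 "\<bar>cos s\<bar>"]
    by (simp add: power2_eq_square abs_mult[symmetric])
  then have "s * (cos s)\<^sup>2 \<le> s * \<bar>cos s\<bar>"
    using assms by (rule mult_left_mono)
  then show ?thesis
    using ex10_growth_term_le[OF assms, of y] by linarith
qed

lemma ex10_decay_rate_le: "2 / (3 * pi) \<le> 1/4"
  using pi_gt3 by (simp add: field_simps)

lemma ex10_short_window_exponent:
  fixes h :: real
  assumes "0 \<le> h" "h \<le> 1"
  shows "ln (1 + h) \<le> ln (1 + 3 * pi / 2) + 1 - 2 / (3 * pi) * h"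
proof -
  have "ln (1 + h) \<le> ln (1 + 3 * pi / 2)"
    using assms pi_gt3 by simp
  moreover have "2 / (3 * pi) * h \<le> 1"
    using assms ex10_decay_rate_le mult_mono[of "2 / (3 * pi)" "1/4" h 1] by simp
  ultimately show ?thesis by linarith
qed

lemma ex10_long_window_exponent:
  fixes h :: real
  assumes "1 \<le> h"
  shows "ln (1 + h) + (h - h\<^sup>2) / 4 + 1/4 \<le> ln (1 + 3 * pi / 2) + 1 - 2 / (3 * pi) * h"
proof -
  have rate: "2 / (3 * pi) * h \<le> h / 4"
    using assms ex10_decay_rate_le mult_right_mono[of "2 / (3 * pi)" "1/4" h] by simp
  have ln_const: "ln 5 \<le> ln (1 + 3 * pi / 2)"
    using pi_gt3 by simp
  show ?thesis
  proof (cases "h \<le> 4")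
    case True
    have "ln (1 + h) \<le> ln 5"
      using True assms by simp
    moreover have "(h - h\<^sup>2) / 4 + 1/4 + h / 4 \<le> 1"
      using zero_le_power2[of "h - 1"] by (simp add: power2_eq_square field_simps)
    ultimately show ?thesis using ln_const rate by linarith
  next
    case False
    then have h4: "h * 4 \<le> h * h" by simp
    have "1 + h \<le> 1 + h / 2 + (h / 2)\<^sup>2 / 2"
      using h4 by (simp add: power2_eq_square field_simps)
    also have "\<dots> \<le> exp (h / 2)"
      using assms by (intro exp_lower_Taylor_quadratic) auto
    finally have "ln (1 + h) \<le> h / 2"
      using assms ln_le_cancel_iff[of "1 + h" "exp (h / 2)"] by simp
    moreover have "h / 2 + (h - h\<^sup>2) / 4 + 1/4 + h / 4 \<le> 1"
      using h4 by (simp add: power2_eq_square field_simps)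
    moreover have "0 \<le> ln (1 + 3 * pi / 2)"
      using pi_gt3 by simp
    ultimately show ?thesis using rate by linarith
  qed
qed

lemma ex10_solution_decay:
  fixes x :: "real \<Rightarrow> real"
  assumes "0 \<le> t0" and sol: "is_solution_from ex10_rhs t0 x" and "t0 \<le> t"
  shows "\<bar>x t\<bar> \<le> exp (ln (1 + 3 * pi / 2) + 1) * exp (- (2 / (3 * pi)) * (t - t0)) * \<bar>x t0\<bar>"
proof -
  have "0 \<le> t"
    using assms by linarith
  define C where "C = ln (1 + 3 * pi / 2) + 1 - 2 / (3 * pi) * (t - t0)"
  define g where "g s = 1 / (1 + s + (x s)\<^sup>2) - s * \<bar>cos s\<bar>" for s
  have x': "(x has_real_derivative g s * x s) (at s within {t0..})" if "s \<ge> t0" for s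
    using sol that unfolding is_solution_from_def ex10_rhs_def g_def by auto
  have ln_diff: "ln (1 + t) - ln (1 + t0) \<le> ln (1 + (t - t0))"
    using ln_one_plus_diff_le \<open>0 \<le> t0\<close> \<open>t0 \<le> t\<close> .
  obtain B B' where B: "\<And>s. s \<ge> t0 \<Longrightarrow> (B has_real_derivative B' s) (at s within {t0..})"
    and rate: "\<And>s. s \<ge> t0 \<Longrightarrow> g s \<le> B' s" and exponent: "B t - B t0 \<le> C"
  proof (cases "t - t0 \<le> 1")
    case True
    show ?thesis
    proof (rule that[of "\<lambda>s. ln (1 + s)" "\<lambda>s. 1 / (1 + s)"])
      show "((\<lambda>s. ln (1 + s)) has_real_derivative 1 / (1 + s)) (at s within {t0..})"
        if "s \<ge> t0" for s
        using that \<open>0 \<le> t0\<close> by (auto intro!: derivative_eq_intros)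
      show "g s \<le> 1 / (1 + s)" if "s \<ge> t0" for s
        unfolding g_def using that \<open>0 \<le> t0\<close> by (intro ex10_rate_le_log_rate) simp
      show "ln (1 + t) - ln (1 + t0) \<le> C"
        using ln_diff ex10_short_window_exponent[of "t - t0"] True \<open>t0 \<le> t\<close>
        unfolding C_def by simp
    qed
  next
    case False
    then have long: "1 \<le> t - t0" by simp
    show ?thesis
    proof (rule that[of "\<lambda>s. ln (1 + s) - damping_primitive s" "\<lambda>s. 1 / (1 + s) - s * (cos s)\<^sup>2"])
      show "((\<lambda>s. ln (1 + s) - damping_primitive s) has_real_derivative 1 / (1 + s) - s * (cos s)\<^sup>2)
          (at s within {t0..})" if "s \<ge> t0" for s
        using that \<open>0 \<le> t0\<close>
        by (auto intro!: derivative_eq_intros damping_primitive_deriv)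
      show "g s \<le> 1 / (1 + s) - s * (cos s)\<^sup>2" if "s \<ge> t0" for s
        unfolding g_def using that \<open>0 \<le> t0\<close> by (intro ex10_rate_le_damped_rate) simp
      have "(t - t0)\<^sup>2 - (t - t0) \<le> t\<^sup>2 - t0\<^sup>2 - t - t0"
        using long \<open>0 \<le> t0\<close> mult_nonneg_nonneg[of t0 "t - t0 - 1"]
        by (simp add: power2_eq_square algebra_simps)
      then show "ln (1 + t) - damping_primitive t - (ln (1 + t0) - damping_primitive t0) \<le> C"
        using ln_diff ex10_long_window_exponent[OF long]
          damping_primitive_increment_ge[OF \<open>0 \<le> t0\<close> \<open>0 \<le> t\<close>]
        unfolding C_def by argo
    qed
  qed
  have "\<bar>x t\<bar> \<le> exp (B t - B t0) * \<bar>x t0\<bar>"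
    using linear_ode_growth_bound[OF x' B rate \<open>t0 \<le> t\<close>] .
  also have "\<dots> \<le> exp C * \<bar>x t0\<bar>"
    using exponent by (intro mult_right_mono) auto
  finally show ?thesis
    unfolding C_def by (simp add: mult_exp_exp)
qed

lemma GUES_if_exponential_bound:
  assumes "\<theta> > 0" "\<alpha> > 0"
    and bound: "\<And>t0 x t. 0 \<le> t0 \<Longrightarrow> is_solution_from f t0 x \<Longrightarrow> t0 \<le> t \<Longrightarrow>
      \<bar>x t\<bar> \<le> \<theta> * exp (- \<alpha> * (t - t0)) * \<bar>x t0\<bar>"
  shows "GUES f"
  unfolding GUES_def using assms by (metis mult.assoc mult.commute)

theorem mainTheorem10:
  shows "(\<forall>t0\<ge>0. \<forall>x. is_solution_from ex10_rhs t0 x \<longrightarrow>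
            (\<forall>t\<ge>t0. \<bar>x t\<bar> \<le> exp (ln (1 + 3 * pi / 2) + 1) * exp (- (2 / (3 * pi)) * (t - t0)) * \<bar>x t0\<bar>))
         \<and> GUES ex10_rhs"
  using ex10_solution_decay
  by (auto intro!: GUES_if_exponential_bound[where \<theta> = "exp (ln (1 + 3 * pi / 2) + 1)"
      and \<alpha> = "2 / (3 * pi)"])

end
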